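(* Consider a deterministic two-player mean-payoff game on $\vec{\mathcal G}=([n],E)$, $m=|E|$. Fix $r\in\mathbb R^m$, and let $\tilde r\in\mathbb R^m$ and $\varepsilon>0$ satisfy $\|r-\tilde r\|_\infty\le\varepsilon$. Let $(\sigma,\tau)\in\Xi$ and let $E^{\sigma,\tau}\subseteq E$ be the set of edges used by $(\sigma,\tau)$. Define $r^{(1)},r^{(2)}\in\mathbb R^m$ by $r^{(1)}_{ij}=r^{(2)}_{ij}=\tilde r_{ij}$ if $(i,j)\in E^{\sigma,\tau}$, and $r^{(1)}_{ij}=\tilde r_{ij}-2n\varepsilon$, $r^{(2)}_{ij}=\tilde r_{ij}+2n\varepsilon$ otherwise. If $(\sigma,\tau)$ is a pair of optimal policies in the mean-payoff games with weights $r^{(1)}$ and with weights $r^{(2)}$, then $(\sigma,\tau)$ is a pair of optimal policies in the mean-payoff game with weights $r$.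
   Context: The game is played on a directed graph without multiple edges, each vertex having an outgoing edge, with $[n]=V_{\max}\uplus V_{\min}$ and weights $r\in\mathbb R^E$. Policies $\sigma:V_{\max}\to[n]$, $\tau:V_{\min}\to[n]$ with $(i,\sigma(i)),(i,\tau(i))\in E$; $E^{\sigma,\tau}=\{(i,\sigma(i)):i\in V_{\max}\}\cup\{(i,\tau(i)):i\in V_{\min}\}$. $\Xi$ is the set of pairs for which the subgraph with edge set $E^{\sigma,\tau}$ has exactly one directed cycle. Playing $(\sigma,\tau)$ from $i$, the token enters a cycle; $g_i(\sigma,\tau)$ is its mean weight (sum of weights / number of edges). The value is the unique $\lambda\in\mathbb R^n$ admitting $(\sigma^*,\tau^* )$ with $g_i(\sigma',\tau^* )\le\lambda_i\le g_i(\sigma^*,\tau')$ for all $i,\sigma',\tau'$; such $(\sigma^*,\tau^* )$ is called a pair of optimal policies. *)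

theory Defs
  imports Complex_Main
begin

text \<open>Vertices are [n] = {0..<n}; edges E :: (nat * nat) set; weights are
functions on edges (only their values on E matter).\<close>

definition game_graph :: "nat \<Rightarrow> (nat \<times> nat) set \<Rightarrow> nat set \<Rightarrow> nat set \<Rightarrow> bool" where
  "game_graph n E Vmax Vmin \<longleftrightarrow>
     E \<subseteq> {0..<n} \<times> {0..<n} \<and>
     (\<forall>i\<in>{0..<n}. \<exists>j. (i, j) \<in> E) \<and>
     Vmax \<union> Vmin = {0..<n} \<and> Vmax \<inter> Vmin = {}"

definition is_policy :: "(nat \<times> nat) set \<Rightarrow> nat set \<Rightarrow> (nat \<Rightarrow> nat) \<Rightarrow> bool" where
  "is_policy E V p \<longleftrightarrow> (\<forall>i\<in>V. (i, p i) \<in> E)"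

definition succ_of :: "nat set \<Rightarrow> (nat \<Rightarrow> nat) \<Rightarrow> (nat \<Rightarrow> nat) \<Rightarrow> nat \<Rightarrow> nat" where
  "succ_of Vmax \<sigma> \<tau> i = (if i \<in> Vmax then \<sigma> i else \<tau> i)"

definition policy_edges :: "nat set \<Rightarrow> nat set \<Rightarrow> (nat \<Rightarrow> nat) \<Rightarrow> (nat \<Rightarrow> nat) \<Rightarrow> (nat \<times> nat) set" where
  "policy_edges Vmax Vmin \<sigma> \<tau> = {(i, \<sigma> i) | i. i \<in> Vmax} \<union> {(i, \<tau> i) | i. i \<in> Vmin}"

definition is_dcycle :: "(nat \<times> nat) set \<Rightarrow> (nat \<times> nat) set \<Rightarrow> bool" where
  "is_dcycle F C \<longleftrightarrow> (\<exists>vs. vs \<noteq> [] \<and> distinct vs \<and>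
      C = {(vs ! k, vs ! (Suc k mod length vs)) | k. k < length vs} \<and> C \<subseteq> F)"

definition Xi :: "nat set \<Rightarrow> nat set \<Rightarrow> (nat \<Rightarrow> nat) \<Rightarrow> (nat \<Rightarrow> nat) \<Rightarrow> bool" where
  "Xi Vmax Vmin \<sigma> \<tau> \<longleftrightarrow> (\<exists>!C. is_dcycle (policy_edges Vmax Vmin \<sigma> \<tau>) C)"

text \<open>g_i(sigma,tau): mean weight of the cycle the token enters from i.
After n steps the token is on the cycle; p is the cycle length.\<close>
definition mean_payoff ::
  "nat \<Rightarrow> nat set \<Rightarrow> (nat \<times> nat \<Rightarrow> real) \<Rightarrow> (nat \<Rightarrow> nat) \<Rightarrow> (nat \<Rightarrow> nat) \<Rightarrow> nat \<Rightarrow> real" where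
  "mean_payoff n Vmax r \<sigma> \<tau> i =
     (let f = succ_of Vmax \<sigma> \<tau>;
          j = (f ^^ n) i;
          p = (LEAST p. 0 < p \<and> (f ^^ p) j = j)
      in (\<Sum>k<p. r ((f ^^ k) j, (f ^^ Suc k) j)) / real p)"

definition optimal_pair ::
  "nat \<Rightarrow> (nat \<times> nat) set \<Rightarrow> nat set \<Rightarrow> nat set \<Rightarrow> (nat \<times> nat \<Rightarrow> real)
     \<Rightarrow> (nat \<Rightarrow> nat) \<Rightarrow> (nat \<Rightarrow> nat) \<Rightarrow> bool" where
  "optimal_pair n E Vmax Vmin r \<sigma> \<tau> \<longleftrightarrow>
     (\<exists>val :: nat \<Rightarrow> real. \<forall>i\<in>{0..<n}. \<forall>\<sigma>' \<tau>'.
        is_policy E Vmax \<sigma>' \<longrightarrow> is_policy E Vmin \<tau>' \<longrightarrow>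
          mean_payoff n Vmax r \<sigma>' \<tau> i \<le> val i \<and> val i \<le> mean_payoff n Vmax r \<sigma> \<tau>' i)"

end

theory Submission
  imports Defs
begin

text \<open>A play under fixed policies ends in a cycle of the successor map, and the mean payoff is
the mean weight of that cycle. Let one player deviate. If the new cycle uses only edges of
(\<sigma>, \<tau>), it is the unique cycle of (\<sigma>, \<tau>) and nothing changes. Otherwise it contains a perturbed
edge; having at most n edges, its mean under r(2) (for a deviation of Max; r(1) for Min) is at
least 2\<epsilon> more favourable to the deviator than under the estimate rt. Optimality of (\<sigma>, \<tau>) for the
perturbed weights therefore holds with a margin of 2\<epsilon>, which absorbs the error \<epsilon> between r and rt
on each of the two cycles.\<close>

lemma funpow_in_closed_set:
  assumes "f ` A \<subseteq> A" "x \<in> A"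
  shows "(f ^^ k) x \<in> A"
  using assms by (induction k) auto

lemma funpow_periodic_after:
  assumes "finite A" "f ` A \<subseteq> A" "x \<in> A" "card A \<le> m"
  shows "\<exists>p. 0 < p \<and> p \<le> card A \<and> (f ^^ p) ((f ^^ m) x) = (f ^^ m) x"
proof -
  let ?orbit = "\<lambda>k. (f ^^ k) x"
  have "\<not> inj_on ?orbit {..card A}"
  proof
    assume "inj_on ?orbit {..card A}"
    then have "card {..card A} \<le> card A"
      by (rule card_inj_on_le) (use funpow_in_closed_set assms in auto)
    then show False by simp
  qed
  then obtain a b where ab: "a < b" "b \<le> card A" "?orbit a = ?orbit b"
    unfolding inj_on_def by (metis atMost_iff linorder_neqE_nat)
  have "(b - a) + m = (m - a) + b" using ab assms(4) by simp
  then have "(f ^^ (b - a)) ((f ^^ m) x) = (f ^^ (m - a)) (?orbit b)"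
    by (metis comp_apply funpow_add)
  also have "\<dots> = (f ^^ m) x"
    using ab assms(4) by (metis comp_apply funpow_add le_add_diff_inverse2 less_imp_le le_trans)
  finally show ?thesis using ab by (intro exI[of _ "b - a"]) auto
qed

definition least_period :: "('a \<Rightarrow> 'a) \<Rightarrow> 'a \<Rightarrow> nat" where
  "least_period f x = (LEAST p. 0 < p \<and> (f ^^ p) x = x)"

lemma least_period:
  assumes "0 < p" "(f ^^ p) x = x"
  shows "0 < least_period f x" "least_period f x \<le> p" "(f ^^ least_period f x) x = x"
proof -
  have "0 < least_period f x \<and> (f ^^ least_period f x) x = x"
    unfolding least_period_def by (rule LeastI[of _ p]) (use assms in auto)
  then show "0 < least_period f x" "(f ^^ least_period f x) x = x" by auto
  show "least_period f x \<le> p"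
    unfolding least_period_def by (rule Least_le) (use assms in auto)
qed

lemma inj_on_funpow_least_period:
  assumes "0 < p" "(f ^^ p) x = x"
  shows "inj_on (\<lambda>k. (f ^^ k) x) {..<least_period f x}"
proof -
  let ?q = "least_period f x"
  have no_return: "(f ^^ k) x \<noteq> (f ^^ k') x" if "k < k'" "k' < ?q" for k k'
  proof
    assume "(f ^^ k) x = (f ^^ k') x"
    then have "(f ^^ (?q - k)) ((f ^^ k) x) = (f ^^ (?q - k)) ((f ^^ k') x)" by simp
    then have "(f ^^ (?q - k + k)) x = (f ^^ (?q - k + k')) x"
      by (simp only: funpow_add comp_apply)
    also have "?q - k + k' = (k' - k) + ?q" using that by simp
    finally have "(f ^^ ?q) x = (f ^^ (k' - k)) ((f ^^ ?q) x)"
      using that by (metis funpow_add comp_apply le_add_diff_inverse2 less_imp_le less_trans)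
    then have "(f ^^ (k' - k)) x = x"
      using least_period(3)[OF assms] by simp
    moreover have "\<not> (0 < k' - k \<and> (f ^^ (k' - k)) x = x)"
      using not_less_Least[of "k' - k" "\<lambda>p. 0 < p \<and> (f ^^ p) x = x"] that
      unfolding least_period_def by auto
    ultimately show False using that by simp
  qed
  show ?thesis
    unfolding inj_on_def by (metis lessThan_iff linorder_neqE_nat no_return)
qed

definition cycle_edges :: "('a \<Rightarrow> 'a) \<Rightarrow> 'a \<Rightarrow> ('a \<times> 'a) set" where
  "cycle_edges f x = (\<lambda>k. ((f ^^ k) x, (f ^^ Suc k) x)) ` {..<least_period f x}"

lemma inj_on_cycle_edge_enum:
  assumes "0 < p" "(f ^^ p) x = x"
  shows "inj_on (\<lambda>k. ((f ^^ k) x, (f ^^ Suc k) x)) {..<least_period f x}"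
  using inj_on_funpow_least_period[OF assms] unfolding inj_on_def by auto

lemma card_cycle_edges:
  assumes "0 < p" "(f ^^ p) x = x"
  shows "card (cycle_edges f x) = least_period f x"
  using card_image[OF inj_on_cycle_edge_enum[OF assms]] unfolding cycle_edges_def by simp

lemma cycle_edges_subset_graph:
  assumes "f ` A \<subseteq> A" "x \<in> A"
  shows "cycle_edges f x \<subseteq> (\<lambda>v. (v, f v)) ` A"
  using funpow_in_closed_set[OF assms] unfolding cycle_edges_def by auto

lemma is_dcycle_cycle_edges:
  assumes "0 < p" "(f ^^ p) x = x" and "cycle_edges f x \<subseteq> F"
  shows "is_dcycle F (cycle_edges f x)"
proof -
  let ?q = "least_period f x"
  define vs where "vs = map (\<lambda>k. (f ^^ k) x) [0..<?q]"
  have len: "length vs = ?q" and nth: "\<And>k. k < ?q \<Longrightarrow> vs ! k = (f ^^ k) x"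
    unfolding vs_def by simp_all
  have "vs \<noteq> []" using least_period(1)[OF assms(1,2)] len by auto
  moreover have "distinct vs"
    using inj_on_funpow_least_period[OF assms(1,2)]
    unfolding distinct_conv_nth len inj_on_def by (auto simp: nth)
  moreover have "cycle_edges f x = {(vs ! k, vs ! (Suc k mod length vs)) | k. k < length vs}"
  proof -
    have next_vertex: "vs ! (Suc k mod ?q) = (f ^^ Suc k) x" if "k < ?q" for k
      using that nth least_period(1)[OF assms(1,2)] funpow_mod_eq[OF least_period(3)[OF assms(1,2)]]
      by simp
    have "cycle_edges f x = (\<lambda>k. (vs ! k, vs ! (Suc k mod length vs))) ` {..<length vs}"
      unfolding cycle_edges_def len using nth next_vertex by (intro image_cong) auto
    then show ?thesis by auto
  qed
  ultimately show ?thesis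
    unfolding is_dcycle_def using assms(3) by blast
qed

definition cycle_mean :: "('a \<Rightarrow> real) \<Rightarrow> 'a set \<Rightarrow> real" where
  "cycle_mean w C = sum w C / real (card C)"

lemma cycle_mean_perturb:
  assumes "finite C" "C \<noteq> {}" "\<forall>e\<in>C. \<bar>r e - r' e\<bar> \<le> \<epsilon>"
  shows "\<bar>cycle_mean r C - cycle_mean r' C\<bar> \<le> \<epsilon>"
proof -
  have "\<bar>sum r C - sum r' C\<bar> \<le> (\<Sum>e\<in>C. \<bar>r e - r' e\<bar>)"
    by (simp flip: sum_subtractf add: sum_abs)
  also have "\<dots> \<le> real (card C) * \<epsilon>"
    using sum_bounded_above[of C "\<lambda>e. \<bar>r e - r' e\<bar>" \<epsilon>] assms(3) by simp
  finally show ?thesis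
    using assms(1,2) by (simp add: cycle_mean_def card_gt_0_iff field_simps flip: diff_divide_distrib)
qed

lemma cycle_mean_penalty_ge:
  assumes "finite C" "card C \<le> N" "e\<^sub>0 \<in> C" "e\<^sub>0 \<notin> P" "0 \<le> c"
  shows "cycle_mean w C + c / real N \<le> cycle_mean (\<lambda>e. if e \<in> P then w e else w e + c) C"
proof -
  let ?w' = "\<lambda>e. if e \<in> P then w e else w e + c"
  have card_pos: "0 < real (card C)"
    using assms(1,3) card_gt_0_iff by auto
  have "c \<le> (\<Sum>e\<in>C. ?w' e - w e)"
    using assms(1,3,4,5) member_le_sum[of e\<^sub>0 C "\<lambda>e. ?w' e - w e"] by auto
  then have "sum w C + c \<le> sum ?w' C"
    by (simp add: sum_subtractf)
  have "c / real N \<le> c / real (card C)"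
    using assms(2,5) card_pos by (intro divide_left_mono) auto
  then have "cycle_mean w C + c / real N \<le> (sum w C + c) / real (card C)"
    unfolding cycle_mean_def by (simp add: add_divide_distrib)
  also have "\<dots> \<le> sum ?w' C / real (card C)"
    using \<open>sum w C + c \<le> sum ?w' C\<close> card_pos by (simp add: divide_right_mono)
  finally show ?thesis unfolding cycle_mean_def .
qed

lemma cycle_mean_le_of_penalized_le:
  fixes r r' :: "'a \<Rightarrow> real"
  assumes C: "finite C" "card C \<le> N" and D: "finite D" "D \<noteq> {}" "D \<subseteq> P"
    and "0 \<le> \<epsilon>" and close: "\<forall>e\<in>C \<union> D. \<bar>r e - r' e\<bar> \<le> \<epsilon>"
    and unique: "C \<subseteq> P \<Longrightarrow> C = D"
    and le: "cycle_mean (\<lambda>e. if e \<in> P then r' e else r' e + 2 * real N * \<epsilon>) C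
           \<le> cycle_mean (\<lambda>e. if e \<in> P then r' e else r' e + 2 * real N * \<epsilon>) D"
  shows "cycle_mean r C \<le> cycle_mean r D"
proof (cases "C \<subseteq> P")
  case True
  then show ?thesis using unique by simp
next
  case False
  then obtain e\<^sub>0 where e\<^sub>0: "e\<^sub>0 \<in> C" "e\<^sub>0 \<notin> P" by auto
  let ?pen = "\<lambda>e. if e \<in> P then r' e else r' e + 2 * real N * \<epsilon>"
  have "0 < N" using C e\<^sub>0 card_gt_0_iff by fastforce
  have "cycle_mean r C \<le> cycle_mean r' C + \<epsilon>"
    using cycle_mean_perturb[OF C(1) _, of r r' \<epsilon>] e\<^sub>0 close by (force simp: abs_le_iff)
  also have "\<dots> \<le> cycle_mean ?pen C - \<epsilon>"
    using cycle_mean_penalty_ge[OF C e\<^sub>0, of "2 * real N * \<epsilon>" r'] \<open>0 < N\<close> \<open>0 \<le> \<epsilon>\<close> by simp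
  also have "\<dots> \<le> cycle_mean ?pen D - \<epsilon>"
    using le by simp
  also have "cycle_mean ?pen D = cycle_mean r' D"
    unfolding cycle_mean_def using D(3) by (simp add: subset_iff)
  also have "cycle_mean r' D - \<epsilon> \<le> cycle_mean r D"
    using cycle_mean_perturb[OF D(1,2), of r r' \<epsilon>] close by (auto simp: abs_le_iff)
  finally show ?thesis .
qed

definition play_cycle ::
  "nat \<Rightarrow> nat set \<Rightarrow> (nat \<Rightarrow> nat) \<Rightarrow> (nat \<Rightarrow> nat) \<Rightarrow> nat \<Rightarrow> (nat \<times> nat) set" where
  "play_cycle n Vmax \<sigma> \<tau> i = cycle_edges (succ_of Vmax \<sigma> \<tau>) ((succ_of Vmax \<sigma> \<tau> ^^ n) i)"

lemma succ_of_edge: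
  assumes "game_graph n E Vmax Vmin" "is_policy E Vmax \<sigma>" "is_policy E Vmin \<tau>" "v < n"
  shows "(v, succ_of Vmax \<sigma> \<tau> v) \<in> E"
  using assms unfolding game_graph_def is_policy_def succ_of_def by auto

lemma succ_of_policy_edge:
  assumes "game_graph n E Vmax Vmin" "v < n"
  shows "(v, succ_of Vmax \<sigma> \<tau> v) \<in> policy_edges Vmax Vmin \<sigma> \<tau>"
  using assms unfolding game_graph_def policy_edges_def succ_of_def by auto

lemma succ_of_closed:
  assumes "game_graph n E Vmax Vmin" "is_policy E Vmax \<sigma>" "is_policy E Vmin \<tau>"
  shows "succ_of Vmax \<sigma> \<tau> ` {0..<n} \<subseteq> {0..<n}"
  using succ_of_edge[OF assms] assms(1) unfolding game_graph_def by fastforce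

lemma play_returns:
  assumes "game_graph n E Vmax Vmin" "is_policy E Vmax \<sigma>" "is_policy E Vmin \<tau>" "i < n"
  defines "f \<equiv> succ_of Vmax \<sigma> \<tau>"
  obtains p where "0 < p" "p \<le> n" "(f ^^ p) ((f ^^ n) i) = (f ^^ n) i"
proof -
  have "f ` {0..<n} \<subseteq> {0..<n}"
    unfolding f_def by (rule succ_of_closed[OF assms(1-3)])
  with funpow_periodic_after[of "{0..<n}" f i n] assms(4) show thesis
    using that by auto
qed

lemma play_cycle_bounds:
  assumes "game_graph n E Vmax Vmin" "is_policy E Vmax \<sigma>" "is_policy E Vmin \<tau>" "i < n"
  shows "finite (play_cycle n Vmax \<sigma> \<tau> i)" "play_cycle n Vmax \<sigma> \<tau> i \<noteq> {}"
    "card (play_cycle n Vmax \<sigma> \<tau> i) \<le> n"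
proof -
  obtain p where p: "0 < p" "p \<le> n"
    "(succ_of Vmax \<sigma> \<tau> ^^ p) ((succ_of Vmax \<sigma> \<tau> ^^ n) i) = (succ_of Vmax \<sigma> \<tau> ^^ n) i"
    using play_returns[OF assms] .
  show "finite (play_cycle n Vmax \<sigma> \<tau> i)"
    unfolding play_cycle_def cycle_edges_def by simp
  show "play_cycle n Vmax \<sigma> \<tau> i \<noteq> {}" "card (play_cycle n Vmax \<sigma> \<tau> i) \<le> n"
    unfolding play_cycle_def using card_cycle_edges[OF p(1,3)] least_period(1,2)[OF p(1,3)] p(2)
    by (auto simp: cycle_edges_def)
qed

lemma play_cycle_edgeE:
  assumes "game_graph n E Vmax Vmin" "is_policy E Vmax \<sigma>" "is_policy E Vmin \<tau>" "i < n"
    "e \<in> play_cycle n Vmax \<sigma> \<tau> i"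
  obtains v where "v < n" "e = (v, succ_of Vmax \<sigma> \<tau> v)"
  using cycle_edges_subset_graph[OF succ_of_closed[OF assms(1-3)]]
    funpow_in_closed_set[OF succ_of_closed[OF assms(1-3)]] assms(4,5)
  unfolding play_cycle_def by fastforce

lemma play_cycle_subset_edges:
  assumes "game_graph n E Vmax Vmin" "is_policy E Vmax \<sigma>" "is_policy E Vmin \<tau>" "i < n"
  shows "play_cycle n Vmax \<sigma> \<tau> i \<subseteq> E"
proof
  fix e assume "e \<in> play_cycle n Vmax \<sigma> \<tau> i"
  then obtain v where "v < n" "e = (v, succ_of Vmax \<sigma> \<tau> v)"
    using play_cycle_edgeE[OF assms] by blast
  then show "e \<in> E" using succ_of_edge[OF assms(1-3)] by simp
qed

lemma play_cycle_subset_policy_edges: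
  assumes "game_graph n E Vmax Vmin" "is_policy E Vmax \<sigma>" "is_policy E Vmin \<tau>" "i < n"
  shows "play_cycle n Vmax \<sigma> \<tau> i \<subseteq> policy_edges Vmax Vmin \<sigma> \<tau>"
proof
  fix e assume "e \<in> play_cycle n Vmax \<sigma> \<tau> i"
  then obtain v where "v < n" "e = (v, succ_of Vmax \<sigma> \<tau> v)"
    using play_cycle_edgeE[OF assms] by blast
  then show "e \<in> policy_edges Vmax Vmin \<sigma> \<tau>" using succ_of_policy_edge[OF assms(1)] by simp
qed

lemma is_dcycle_play_cycle:
  assumes "game_graph n E Vmax Vmin" "is_policy E Vmax \<sigma>" "is_policy E Vmin \<tau>" "i < n"
    "play_cycle n Vmax \<sigma> \<tau> i \<subseteq> F"
  shows "is_dcycle F (play_cycle n Vmax \<sigma> \<tau> i)"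
proof -
  obtain p where "0 < p"
    "(succ_of Vmax \<sigma> \<tau> ^^ p) ((succ_of Vmax \<sigma> \<tau> ^^ n) i) = (succ_of Vmax \<sigma> \<tau> ^^ n) i"
    using play_returns[OF assms(1-4)] .
  then show ?thesis
    using is_dcycle_cycle_edges assms(5) unfolding play_cycle_def by blast
qed

lemma play_cycle_eq_if_Xi:
  assumes game: "game_graph n E Vmax Vmin" and "Xi Vmax Vmin \<sigma> \<tau>"
    and pol: "is_policy E Vmax \<sigma>" "is_policy E Vmin \<tau>" "is_policy E Vmax \<sigma>'" "is_policy E Vmin \<tau>'"
    and "i < n" and "play_cycle n Vmax \<sigma>' \<tau>' i \<subseteq> policy_edges Vmax Vmin \<sigma> \<tau>"
  shows "play_cycle n Vmax \<sigma>' \<tau>' i = play_cycle n Vmax \<sigma> \<tau> i"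
proof -
  have "is_dcycle (policy_edges Vmax Vmin \<sigma> \<tau>) (play_cycle n Vmax \<sigma>' \<tau>' i)"
    using is_dcycle_play_cycle[OF game pol(3,4) \<open>i < n\<close> assms(8)] .
  moreover have "is_dcycle (policy_edges Vmax Vmin \<sigma> \<tau>) (play_cycle n Vmax \<sigma> \<tau> i)"
    using is_dcycle_play_cycle[OF game pol(1,2) \<open>i < n\<close>]
      play_cycle_subset_policy_edges[OF game pol(1,2) \<open>i < n\<close>] .
  ultimately show ?thesis
    using \<open>Xi Vmax Vmin \<sigma> \<tau>\<close> unfolding Xi_def by blast
qed

lemma mean_payoff_eq_cycle_mean:
  assumes "game_graph n E Vmax Vmin" "is_policy E Vmax \<sigma>" "is_policy E Vmin \<tau>" "i < n"
  shows "mean_payoff n Vmax r \<sigma> \<tau> i = cycle_mean r (play_cycle n Vmax \<sigma> \<tau> i)"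
proof -
  let ?f = "succ_of Vmax \<sigma> \<tau>"
  let ?x = "(?f ^^ n) i"
  obtain p where p: "0 < p" "(?f ^^ p) ?x = ?x"
    using play_returns[OF assms] by metis
  have "sum r (cycle_edges ?f ?x) = (\<Sum>k<least_period ?f ?x. r ((?f ^^ k) ?x, (?f ^^ Suc k) ?x))"
    unfolding cycle_edges_def by (rule sum.reindex_cong[OF inj_on_cycle_edge_enum[OF p]]) simp_all
  then show ?thesis
    unfolding mean_payoff_def cycle_mean_def play_cycle_def card_cycle_edges[OF p] Let_def
    by (simp add: least_period_def)
qed

lemma mean_payoff_uminus:
  "mean_payoff n Vmax (\<lambda>e. - r e) \<sigma> \<tau> i = - mean_payoff n Vmax r \<sigma> \<tau> i"
  unfolding mean_payoff_def Let_def by (simp add: sum_negf)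

lemma optimal_pair_saddle:
  assumes "optimal_pair n E Vmax Vmin r \<sigma> \<tau>" "i < n"
    and "is_policy E Vmax \<sigma>" "is_policy E Vmin \<tau>" "is_policy E Vmax \<sigma>'" "is_policy E Vmin \<tau>'"
  shows "mean_payoff n Vmax r \<sigma>' \<tau> i \<le> mean_payoff n Vmax r \<sigma> \<tau> i"
    and "mean_payoff n Vmax r \<sigma> \<tau> i \<le> mean_payoff n Vmax r \<sigma> \<tau>' i"
proof -
  obtain val where "\<forall>i\<in>{0..<n}. \<forall>\<sigma>' \<tau>'. is_policy E Vmax \<sigma>' \<longrightarrow> is_policy E Vmin \<tau>' \<longrightarrow>
      mean_payoff n Vmax r \<sigma>' \<tau> i \<le> val i \<and> val i \<le> mean_payoff n Vmax r \<sigma> \<tau>' i"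
    using assms(1) unfolding optimal_pair_def by blast
  then have val: "mean_payoff n Vmax r \<sigma>' \<tau> i \<le> val i \<and> val i \<le> mean_payoff n Vmax r \<sigma> \<tau>' i"
    if "is_policy E Vmax \<sigma>'" "is_policy E Vmin \<tau>'" for \<sigma>' \<tau>'
    using assms(2) that by simp
  show "mean_payoff n Vmax r \<sigma>' \<tau> i \<le> mean_payoff n Vmax r \<sigma> \<tau> i"
    using val[OF assms(5,4)] val[OF assms(3,4)] by linarith
  show "mean_payoff n Vmax r \<sigma> \<tau> i \<le> mean_payoff n Vmax r \<sigma> \<tau>' i"
    using val[OF assms(3,6)] val[OF assms(3,4)] by linarith
qed

lemma optimal_pairI:
  assumes "\<And>i \<sigma>' \<tau>'. i < n \<Longrightarrow> is_policy E Vmax \<sigma>' \<Longrightarrow> is_policy E Vmin \<tau>' \<Longrightarrow>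
      mean_payoff n Vmax r \<sigma>' \<tau> i \<le> mean_payoff n Vmax r \<sigma> \<tau> i \<and>
      mean_payoff n Vmax r \<sigma> \<tau> i \<le> mean_payoff n Vmax r \<sigma> \<tau>' i"
  shows "optimal_pair n E Vmax Vmin r \<sigma> \<tau>"
  unfolding optimal_pair_def using assms by (intro exI[of _ "mean_payoff n Vmax r \<sigma> \<tau>"]) auto

lemma mean_payoff_le_of_penalized_le:
  assumes game: "game_graph n E Vmax Vmin" and "0 \<le> \<epsilon>" and close: "\<forall>e\<in>E. \<bar>r e - r' e\<bar> \<le> \<epsilon>"
    and pol: "is_policy E Vmax \<sigma>" "is_policy E Vmin \<tau>" "is_policy E Vmax \<sigma>'" "is_policy E Vmin \<tau>'"
    and Xi: "Xi Vmax Vmin \<sigma> \<tau>" and "i < n"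
    and le: "mean_payoff n Vmax
        (\<lambda>e. if e \<in> policy_edges Vmax Vmin \<sigma> \<tau> then r' e else r' e + 2 * real n * \<epsilon>) \<sigma>' \<tau>' i
      \<le> mean_payoff n Vmax
        (\<lambda>e. if e \<in> policy_edges Vmax Vmin \<sigma> \<tau> then r' e else r' e + 2 * real n * \<epsilon>) \<sigma> \<tau> i"
  shows "mean_payoff n Vmax r \<sigma>' \<tau>' i \<le> mean_payoff n Vmax r \<sigma> \<tau> i"
  using le unfolding mean_payoff_eq_cycle_mean[OF game pol(1,2) \<open>i < n\<close>]
    mean_payoff_eq_cycle_mean[OF game pol(3,4) \<open>i < n\<close>]
proof (rule cycle_mean_le_of_penalized_le[rotated -1])
  show "finite (play_cycle n Vmax \<sigma>' \<tau>' i)" "card (play_cycle n Vmax \<sigma>' \<tau>' i) \<le> n"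
    using play_cycle_bounds[OF game pol(3,4) \<open>i < n\<close>] by simp_all
  show "finite (play_cycle n Vmax \<sigma> \<tau> i)" "play_cycle n Vmax \<sigma> \<tau> i \<noteq> {}"
    using play_cycle_bounds[OF game pol(1,2) \<open>i < n\<close>] by simp_all
  show "play_cycle n Vmax \<sigma> \<tau> i \<subseteq> policy_edges Vmax Vmin \<sigma> \<tau>"
    by (rule play_cycle_subset_policy_edges[OF game pol(1,2) \<open>i < n\<close>])
  show "\<forall>e\<in>play_cycle n Vmax \<sigma>' \<tau>' i \<union> play_cycle n Vmax \<sigma> \<tau> i. \<bar>r e - r' e\<bar> \<le> \<epsilon>"
    using close play_cycle_subset_edges[OF game pol(1,2) \<open>i < n\<close>]
      play_cycle_subset_edges[OF game pol(3,4) \<open>i < n\<close>] by blast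
  show "play_cycle n Vmax \<sigma>' \<tau>' i \<subseteq> policy_edges Vmax Vmin \<sigma> \<tau> \<Longrightarrow>
      play_cycle n Vmax \<sigma>' \<tau>' i = play_cycle n Vmax \<sigma> \<tau> i"
    by (rule play_cycle_eq_if_Xi[OF game Xi pol \<open>i < n\<close>])
qed fact

theorem mainTheorem18:
  fixes n :: nat and E :: "(nat \<times> nat) set" and Vmax Vmin :: "nat set"
    and r rt :: "nat \<times> nat \<Rightarrow> real" and \<epsilon> :: real
    and \<sigma> \<tau> :: "nat \<Rightarrow> nat"
  assumes "game_graph n E Vmax Vmin"
    and "\<epsilon> > 0"
    and "\<forall>e\<in>E. \<bar>r e - rt e\<bar> \<le> \<epsilon>"
    and "is_policy E Vmax \<sigma>" and "is_policy E Vmin \<tau>"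
    and "Xi Vmax Vmin \<sigma> \<tau>"
    and "optimal_pair n E Vmax Vmin
           (\<lambda>e. if e \<in> policy_edges Vmax Vmin \<sigma> \<tau> then rt e else rt e - 2 * real n * \<epsilon>) \<sigma> \<tau>"
    and "optimal_pair n E Vmax Vmin
           (\<lambda>e. if e \<in> policy_edges Vmax Vmin \<sigma> \<tau> then rt e else rt e + 2 * real n * \<epsilon>) \<sigma> \<tau>"
  shows "optimal_pair n E Vmax Vmin r \<sigma> \<tau>"
proof (rule optimal_pairI, intro conjI)
  let ?P = "policy_edges Vmax Vmin \<sigma> \<tau>" and ?c = "2 * real n * \<epsilon>"
  fix i \<sigma>' \<tau>' assume i: "i < n" and pol: "is_policy E Vmax \<sigma>'" "is_policy E Vmin \<tau>'"
  have "0 \<le> \<epsilon>" using assms(2) by simp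
  show "mean_payoff n Vmax r \<sigma>' \<tau> i \<le> mean_payoff n Vmax r \<sigma> \<tau> i"
    using optimal_pair_saddle(1)[OF assms(8) i assms(4,5) pol]
    by (rule mean_payoff_le_of_penalized_le[OF assms(1) \<open>0 \<le> \<epsilon>\<close> assms(3-5) pol(1) assms(5,6) i])
  \<comment> \<open>The minimiser's side is the maximiser's side for the negated weights.\<close>
  have neg_r1: "(\<lambda>e. - (if e \<in> ?P then rt e else rt e - ?c)) = (\<lambda>e. if e \<in> ?P then - rt e else - rt e + ?c)"
    by auto
  have close_neg: "\<forall>e\<in>E. \<bar>- r e - - rt e\<bar> \<le> \<epsilon>"
    using assms(3) by (simp add: abs_minus_commute)
  have "mean_payoff n Vmax (\<lambda>e. - r e) \<sigma> \<tau>' i \<le> mean_payoff n Vmax (\<lambda>e. - r e) \<sigma> \<tau> i"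
    using optimal_pair_saddle(2)[OF assms(7) i assms(4,5) pol]
    by (intro mean_payoff_le_of_penalized_le[OF assms(1) \<open>0 \<le> \<epsilon>\<close> close_neg assms(4,5,4) pol(2) assms(6) i])
      (simp flip: neg_r1 add: mean_payoff_uminus)
  then show "mean_payoff n Vmax r \<sigma> \<tau> i \<le> mean_payoff n Vmax r \<sigma> \<tau>' i"
    by (simp add: mean_payoff_uminus)
qed

end
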